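(* Let $\mathcal{L} \subseteq \mathcal{P}(\mathbb{N})$ be a class of languages. The following are equivalent: (i) every $L\in\mathcal L$ is finite; (ii) $\mathcal{L} \in [\tau(\mathbf{Caut}_{\mathbf{Tar}})\mathbf{Txt}\mathbf{Sd}\mathbf{Ex}]$; (iii) $\mathcal{L} \in [\tau(\mathbf{Caut}_{\mathbf{Tar}})\mathbf{Txt}\mathbf{G}\mathbf{Bc}]$.
   Context: Fix an acceptable numbering $(\varphi_e)$ of partial computable functions, $W_e=\mathrm{dom}(\varphi_e)$. A text is a total function $T:\mathbb N\to\mathbb N\cup\{\#\}$, $\mathrm{content}(T)=\mathrm{range}(T)\setminus\{\#\}$, $T[n]=(T(0),\dots,T(n-1))$; $\mathbf{Txt}$ is the set of all texts, $\mathbf{Txt}(L)$ those with content $L$. Learners are partial computable functions. $\mathbf G(h,T)(i)=h(T[i])$, $\mathbf{Sd}(h,T)(i)=h(\mathrm{content}(T[i]))$. For total $p:\mathbb N\to\mathbb N$ and text $T$: $\mathbf{Ex}(p,T)$ iff $\exists n_0\,\forall n\ge n_0: p(n)=p(n_0)\wedge W_{p(n_0)}=\mathrm{content}(T)$; $\mathbf{Bc}(p,T)$ iff $\exists n_0\,\forall n\ge n_0: W_{p(n)}=\mathrm{content}(T)$; $\mathbf{Caut}_{\mathbf{Tar}}(p,T)$ iff for all $n$ it is not the case that $\mathrm{content}(T)\subsetneq W_{p(n)}$. A learner $h$ $\tau(\alpha)\mathbf{Txt}\beta\delta$-learns $L$ iff for every text $T\in\mathbf{Txt}$, $\beta(h,T)$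 is total and $\alpha(\beta(h,T),T)$ holds, and for every $T\in\mathbf{Txt}(L)$, $\delta(\beta(h,T),T)$ holds. $[\tau(\alpha)\mathbf{Txt}\beta\delta]$ is the set of all classes $\mathcal L$ such that some learner $\tau(\alpha)\mathbf{Txt}\beta\delta$-learns every $L\in\mathcal L$. *)

theory Defs
  imports Main "HOL-Library.Nat_Bijection"
begin

datatype recf = Z | S | Id nat | Cn recf "recf list" | Pr recf recf | Mn recf

inductive eval :: "recf \<Rightarrow> nat list \<Rightarrow> nat \<Rightarrow> bool" where
  eval_Z:  "eval Z xs 0"
| eval_S:  "eval S (x # xs) (Suc x)"
| eval_Id: "i < length xs \<Longrightarrow> eval (Id i) xs (xs ! i)"
| eval_Cn: "list_all2 (\<lambda>g y. eval g xs y) gs ys \<Longrightarrow> eval f ys z \<Longrightarrow> eval (Cn f gs) xs z"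
| eval_Pr0: "eval f xs y \<Longrightarrow> eval (Pr f g) (0 # xs) y"
| eval_PrS: "eval (Pr f g) (x # xs) y \<Longrightarrow> eval g (x # y # xs) z \<Longrightarrow> eval (Pr f g) (Suc x # xs) z"
| eval_Mn: "eval f (y # xs) 0 \<Longrightarrow> (\<forall>z<y. \<exists>v. eval f (z # xs) (Suc v)) \<Longrightarrow> eval (Mn f) xs y"

definition computable1 :: "(nat \<Rightarrow> nat option) \<Rightarrow> bool" where
  "computable1 f \<longleftrightarrow> (\<exists>r. \<forall>x y. eval r [x] y \<longleftrightarrow> f x = Some y)"

definition computable2 :: "(nat \<Rightarrow> nat \<Rightarrow> nat option) \<Rightarrow> bool" where
  "computable2 f \<longleftrightarrow> (\<exists>r. \<forall>x z y. eval r [x, z] y \<longleftrightarrow> f x z = Some y)"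

definition acceptable :: "(nat \<Rightarrow> nat \<Rightarrow> nat option) \<Rightarrow> bool" where
  "acceptable \<phi> \<longleftrightarrow>
     computable2 \<phi> \<and>
     (\<forall>f. computable1 f \<longrightarrow> (\<exists>e. \<phi> e = f)) \<and>
     (\<forall>\<psi>. computable2 \<psi> \<longrightarrow>
        (\<exists>t. computable1 (\<lambda>x. Some (t x)) \<and> (\<forall>e. \<phi> (t e) = \<psi> e)))"

definition W :: "(nat \<Rightarrow> nat \<Rightarrow> nat option) \<Rightarrow> nat \<Rightarrow> nat set" where
  "W \<phi> e = {x. \<phi> e x \<noteq> None}"

text \<open>A text is a total function from nat to nat extended by the pause symbol;
  None represents the pause symbol #.\<close>

type_synonym ltext = "nat \<Rightarrow> nat option"

definition content :: "ltext \<Rightarrow> nat set" where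
  "content T = {x. \<exists>n. T n = Some x}"

definition initseg :: "ltext \<Rightarrow> nat \<Rightarrow> nat option list" where
  "initseg T n = map T [0..<n]"

definition content_list :: "nat option list \<Rightarrow> nat set" where
  "content_list xs = {x. Some x \<in> set xs}"

text \<open>Coding of finite sequences (# coded as 0, x as x+1) and of finite sets
  (canonical indices) as natural numbers, the inputs of learners.\<close>

definition seq_code :: "nat option list \<Rightarrow> nat" where
  "seq_code xs = list_encode (map (\<lambda>a. case a of None \<Rightarrow> 0 | Some x \<Rightarrow> Suc x) xs)"

definition set_code :: "nat set \<Rightarrow> nat" where
  "set_code A = set_encode A"

type_synonym learner = "nat \<Rightarrow> nat option"

definition G :: "learner \<Rightarrow> ltext \<Rightarrow> nat \<Rightarrow> nat option" where
  "G h T i = h (seq_code (initseg T i))"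

definition Sd :: "learner \<Rightarrow> ltext \<Rightarrow> nat \<Rightarrow> nat option" where
  "Sd h T i = h (set_code (content_list (initseg T i)))"

definition Ex :: "(nat \<Rightarrow> nat \<Rightarrow> nat option) \<Rightarrow> (nat \<Rightarrow> nat) \<Rightarrow> ltext \<Rightarrow> bool" where
  "Ex \<phi> p T \<longleftrightarrow> (\<exists>n0. \<forall>n\<ge>n0. p n = p n0 \<and> W \<phi> (p n0) = content T)"

definition Bc :: "(nat \<Rightarrow> nat \<Rightarrow> nat option) \<Rightarrow> (nat \<Rightarrow> nat) \<Rightarrow> ltext \<Rightarrow> bool" where
  "Bc \<phi> p T \<longleftrightarrow> (\<exists>n0. \<forall>n\<ge>n0. W \<phi> (p n) = content T)"

definition CautTar :: "(nat \<Rightarrow> nat \<Rightarrow> nat option) \<Rightarrow> (nat \<Rightarrow> nat) \<Rightarrow> ltext \<Rightarrow> bool" where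
  "CautTar \<phi> p T \<longleftrightarrow> (\<forall>n. \<not> (content T \<subset> W \<phi> (p n)))"

definition tau_learns ::
  "(nat \<Rightarrow> nat \<Rightarrow> nat option)
   \<Rightarrow> ((nat \<Rightarrow> nat \<Rightarrow> nat option) \<Rightarrow> (nat \<Rightarrow> nat) \<Rightarrow> ltext \<Rightarrow> bool)
   \<Rightarrow> (learner \<Rightarrow> ltext \<Rightarrow> nat \<Rightarrow> nat option)
   \<Rightarrow> ((nat \<Rightarrow> nat \<Rightarrow> nat option) \<Rightarrow> (nat \<Rightarrow> nat) \<Rightarrow> ltext \<Rightarrow> bool)
   \<Rightarrow> learner \<Rightarrow> nat set \<Rightarrow> bool" where
  "tau_learns \<phi> \<alpha> \<beta> \<delta> h L \<longleftrightarrow>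
     (\<forall>T. (\<forall>i. \<beta> h T i \<noteq> None) \<and> \<alpha> \<phi> (\<lambda>i. the (\<beta> h T i)) T) \<and>
     (\<forall>T. content T = L \<longrightarrow> \<delta> \<phi> (\<lambda>i. the (\<beta> h T i)) T)"

definition tau_class ::
  "(nat \<Rightarrow> nat \<Rightarrow> nat option)
   \<Rightarrow> ((nat \<Rightarrow> nat \<Rightarrow> nat option) \<Rightarrow> (nat \<Rightarrow> nat) \<Rightarrow> ltext \<Rightarrow> bool)
   \<Rightarrow> (learner \<Rightarrow> ltext \<Rightarrow> nat \<Rightarrow> nat option)
   \<Rightarrow> ((nat \<Rightarrow> nat \<Rightarrow> nat option) \<Rightarrow> (nat \<Rightarrow> nat) \<Rightarrow> ltext \<Rightarrow> bool)
   \<Rightarrow> nat set set \<Rightarrow> bool" where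
  "tau_class \<phi> \<alpha> \<beta> \<delta> \<L> \<longleftrightarrow>
     (\<exists>h. computable1 h \<and> (\<forall>L\<in>\<L>. tau_learns \<phi> \<alpha> \<beta> \<delta> h L))"

end

theory Submission
  imports Defs
begin

text \<open>
  If every language of the class is finite, the learner that conjectures exactly the data seen
  so far works: its conjectures never exceed the target, so it is target-cautious, and on a
  text for a finite language the data seen eventually stabilise. A set-driven learner then
  receives a constant input and so outputs a constant conjecture (Ex), while a Gold-style
  learner at least conjectures the right set from some point on (Bc). Indices for "the set
  coded by c" exist because membership in a coded set is semi-decidable by an unbounded search,
  and the acceptable numbering translates the resulting computable numbering into itself.

  Conversely, suppose a cautious learner identifies an infinite language L. On a text for L it
  conjectures L after some finite prefix; padding that prefix with pauses yields a text for a
  finite, hence proper, subset of L on which the learner makes the same conjecture, contradicting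
  caution.
\<close>

section \<open>Programs and the functions they compute\<close>

inductive_cases eval_ZE: "eval Z xs y"
inductive_cases eval_SE: "eval S xs y"
inductive_cases eval_IdE: "eval (Id i) xs y"
inductive_cases eval_CnE: "eval (Cn f gs) xs y"
inductive_cases eval_PrE: "eval (Pr f g) xs y"
inductive_cases eval_MnE: "eval (Mn f) xs y"

lemma eval_functional: "eval f xs y \<Longrightarrow> eval f xs y' \<Longrightarrow> y = y'"
proof (induction arbitrary: y' rule: eval.induct)
  case (eval_Cn xs gs ys f z)
  from eval_Cn.prems obtain ys' where ys': "list_all2 (\<lambda>g y. eval g xs y) gs ys'"
    and "eval f ys' y'"
    by (rule eval_CnE) auto
  have "ys = ys'"
    using eval_Cn.IH(1) ys' by (induction arbitrary: ys' rule: list_all2_induct)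
      (auto simp: list_all2_Cons1)
  with \<open>eval f ys' y'\<close> eval_Cn.IH(2) show ?case by blast
next
  case (eval_PrS f g x xs y z)
  from eval_PrS.prems obtain y2 where "eval (Pr f g) (x # xs) y2" "eval g (x # y2 # xs) y'"
    by (rule eval_PrE) auto
  with eval_PrS.IH show ?case by blast
next
  case (eval_Mn f y xs)
  from eval_Mn.prems have zero: "eval f (y' # xs) 0"
    and nonzero: "\<forall>z<y'. \<exists>v. eval f (z # xs) (Suc v)"
    by (auto elim: eval_MnE)
  show ?case
  proof (rule linorder_cases)
    assume "y < y'"
    with nonzero eval_Mn.IH(1) show ?thesis by fastforce
  next
    assume "y' < y"
    with zero eval_Mn.IH(2) show ?thesis by fastforce
  qed
next
  case (eval_Pr0 f xs y g)
  from eval_Pr0.prems show ?case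
    by (rule eval_PrE) (auto dest: eval_Pr0.IH)
qed (auto elim: eval_ZE eval_SE eval_IdE)

definition computes :: "recf \<Rightarrow> nat \<Rightarrow> (nat list \<Rightarrow> nat) \<Rightarrow> bool" where
  "computes P n F \<longleftrightarrow> (\<forall>xs. length xs = n \<longrightarrow> eval P xs (F xs))"

lemma computes_eval_iff: "computes P n F \<Longrightarrow> length xs = n \<Longrightarrow> eval P xs y \<longleftrightarrow> y = F xs"
  unfolding computes_def using eval_functional by blast

lemma computes_cong:
  "computes P n F \<Longrightarrow> (\<And>xs. length xs = n \<Longrightarrow> F xs = F' xs) \<Longrightarrow> computes P n F'"
  unfolding computes_def by simp

lemma computes_Z: "computes Z n (\<lambda>_. 0)"
  unfolding computes_def by (auto intro: eval_Z)

lemma computes_S: "computes S 1 (\<lambda>xs. Suc (xs ! 0))"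
  unfolding computes_def by (auto simp: length_Suc_conv intro: eval_S)

lemma computes_Id: "i < n \<Longrightarrow> computes (Id i) n (\<lambda>xs. xs ! i)"
  unfolding computes_def by (auto intro: eval_Id)

lemma computes_Cn:
  assumes "computes f (length Fs) F" and "list_all2 (\<lambda>g Q. computes g n Q) gs Fs"
  shows "computes (Cn f gs) n (\<lambda>xs. F (map (\<lambda>Q. Q xs) Fs))"
  unfolding computes_def
proof (intro allI impI)
  fix xs :: "nat list"
  assume "length xs = n"
  with assms(2) have "list_all2 (\<lambda>g y. eval g xs y) gs (map (\<lambda>Q. Q xs) Fs)"
    by (auto simp: list_all2_conv_all_nth computes_def)
  moreover have "eval f (map (\<lambda>Q. Q xs) Fs) (F (map (\<lambda>Q. Q xs) Fs))"
    using assms(1) by (simp add: computes_def)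
  ultimately show "eval (Cn f gs) xs (F (map (\<lambda>Q. Q xs) Fs))"
    by (rule eval_Cn)
qed

lemma computes_Cn1:
  "computes f 1 F \<Longrightarrow> computes g n Q \<Longrightarrow> computes (Cn f [g]) n (\<lambda>xs. F [Q xs])"
  using computes_Cn[of f "[Q]" F n "[g]"] by simp

lemma computes_Cn2:
  "computes f 2 F \<Longrightarrow> computes g n Q \<Longrightarrow> computes g' n Q' \<Longrightarrow>
   computes (Cn f [g, g']) n (\<lambda>xs. F [Q xs, Q' xs])"
  using computes_Cn[of f "[Q, Q']" F n "[g, g']"] by (simp add: numeral_2_eq_2)

lemma computes_Pr:
  assumes "computes f n F" and "computes g (Suc (Suc n)) H"
    and "\<And>xs. length xs = n \<Longrightarrow> R (0 # xs) = F xs"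
    and "\<And>x xs. length xs = n \<Longrightarrow> R (Suc x # xs) = H (x # R (x # xs) # xs)"
  shows "computes (Pr f g) (Suc n) R"
  unfolding computes_def
proof (intro allI impI)
  fix xs :: "nat list"
  assume "length xs = Suc n"
  then obtain x ys where xs: "xs = x # ys" and ys: "length ys = n"
    by (auto simp: length_Suc_conv)
  have "eval (Pr f g) (x # ys) (R (x # ys))"
    using assms ys by (induction x) (auto simp: computes_def intro: eval_Pr0 eval_PrS)
  with xs show "eval (Pr f g) xs (R xs)" by simp
qed

lemma computes_Pr1:
  "computes f 0 F \<Longrightarrow> computes g 2 H \<Longrightarrow> R [0] = F [] \<Longrightarrow>
   (\<And>x. R [Suc x] = H [x, R [x]]) \<Longrightarrow> computes (Pr f g) 1 R"
  using computes_Pr[of f 0 F g H R] by (simp add: numeral_2_eq_2)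

lemma computes_Pr2:
  "computes f 1 F \<Longrightarrow> computes g 3 H \<Longrightarrow> (\<And>y. R [0, y] = F [y]) \<Longrightarrow>
   (\<And>x y. R [Suc x, y] = H [x, R [x, y], y]) \<Longrightarrow> computes (Pr f g) 2 R"
  using computes_Pr[of f 1 F g H R] by (auto simp: numeral_2_eq_2 numeral_3_eq_3 length_Suc_conv)

lemma eval_Mn_iff:
  assumes "computes g (Suc n) H" and "length xs = n"
  shows "eval (Mn g) xs y \<longleftrightarrow> H (y # xs) = 0 \<and> (\<forall>z<y. H (z # xs) \<noteq> 0)"
proof -
  have g: "eval g (z # xs) v \<longleftrightarrow> v = H (z # xs)" for z v
    using computes_eval_iff[OF assms(1)] assms(2) by simp
  have "(\<exists>v. eval g (z # xs) (Suc v)) \<longleftrightarrow> H (z # xs) \<noteq> 0" for z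
    unfolding g by presburger
  then show ?thesis
    using g by (auto elim!: eval_MnE intro!: eval_Mn)
qed

lemma computes_Mn:
  assumes "computes g (Suc n) H" and "\<And>xs. length xs = n \<Longrightarrow> \<exists>y. H (y # xs) = 0"
  shows "computes (Mn g) n (\<lambda>xs. LEAST y. H (y # xs) = 0)"
  unfolding computes_def
proof (intro allI impI)
  fix xs :: "nat list"
  assume xs: "length xs = n"
  let ?y = "LEAST y. H (y # xs) = 0"
  have "H (?y # xs) = 0"
    using assms(2)[OF xs] by (rule LeastI_ex)
  moreover have "\<forall>z<?y. H (z # xs) \<noteq> 0"
    using not_less_Least by blast
  ultimately show "eval (Mn g) xs ?y"
    using eval_Mn_iff[OF assms(1) xs] by blast
qed

lemma computable2_unbounded_search:
  assumes "computes g 3 H"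
  shows "computable2 (\<lambda>c x. if \<exists>z. H [z, c, x] = 0 then Some 0 else None)"
  unfolding computable2_def
proof (intro exI allI)
  fix c x y
  have Mn: "eval (Mn g) [c, x] z \<longleftrightarrow> H [z, c, x] = 0 \<and> (\<forall>z'<z. H [z', c, x] \<noteq> 0)" for z
    using eval_Mn_iff[of g 2 H "[c, x]"] assms by (simp add: numeral_3_eq_3)
  have "eval (Cn Z [Mn g]) [c, x] y \<longleftrightarrow> y = 0 \<and> (\<exists>z. eval (Mn g) [c, x] z)"
    by (auto elim!: eval_CnE eval_ZE simp: list_all2_Cons1 intro!: eval_Cn eval_Z)
  also have "\<dots> \<longleftrightarrow> y = 0 \<and> (\<exists>z. H [z, c, x] = 0)"
    unfolding Mn using exists_least_iff[of "\<lambda>z. H [z, c, x] = 0"] by simp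
  finally show "eval (Cn Z [Mn g]) [c, x] y \<longleftrightarrow>
      (if \<exists>z. H [z, c, x] = 0 then Some 0 else None) = Some y"
    by auto
qed

definition r_add :: recf where
  "r_add = Pr (Id 0) (Cn S [Id 1])"
definition r_mul :: recf where
  "r_mul = Pr Z (Cn r_add [Id 1, Id 2])"
definition r_pred :: recf where
  "r_pred = Pr Z (Id 0)"
definition r_rsub :: recf where
  "r_rsub = Pr (Id 0) (Cn r_pred [Id 1])"
definition r_sub :: recf where
  "r_sub = Cn r_rsub [Id 1, Id 0]"
definition r_triangle :: recf where
  "r_triangle = Pr Z (Cn r_add [Id 1, Cn S [Id 0]])"
definition r_pow2 :: recf where
  "r_pow2 = Pr (Cn S [Z]) (Cn r_add [Id 1, Id 1])"

lemma computes_r_add: "computes r_add 2 (\<lambda>xs. xs ! 0 + xs ! 1)"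
  unfolding r_add_def
  by (rule computes_Pr2[OF computes_Id computes_Cn1[OF computes_S computes_Id]]) simp_all

lemma computes_r_mul: "computes r_mul 2 (\<lambda>xs. xs ! 0 * xs ! 1)"
  unfolding r_mul_def
  by (rule computes_Pr2[OF computes_Z computes_Cn2[OF computes_r_add computes_Id computes_Id]]) simp_all

lemma computes_r_pred: "computes r_pred 1 (\<lambda>xs. xs ! 0 - 1)"
  unfolding r_pred_def by (rule computes_Pr1[OF computes_Z computes_Id]) simp_all

lemma computes_r_rsub: "computes r_rsub 2 (\<lambda>xs. xs ! 1 - xs ! 0)"
  unfolding r_rsub_def
  by (rule computes_Pr2[OF computes_Id computes_Cn1[OF computes_r_pred computes_Id]]) simp_all

lemma computes_r_sub: "computes r_sub 2 (\<lambda>xs. xs ! 0 - xs ! 1)"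
  unfolding r_sub_def using computes_Cn2[OF computes_r_rsub computes_Id computes_Id]
  by simp

lemma computes_r_triangle: "computes r_triangle 1 (\<lambda>xs. triangle (xs ! 0))"
  unfolding r_triangle_def
  by (rule computes_Pr1[OF computes_Z computes_Cn2[OF computes_r_add computes_Id
        computes_Cn1[OF computes_S computes_Id]]]) simp_all

lemma computes_r_pow2: "computes r_pow2 1 (\<lambda>xs. 2 ^ (xs ! 0))"
  unfolding r_pow2_def
  by (rule computes_Pr1[OF computes_Cn1[OF computes_S computes_Z]
        computes_Cn2[OF computes_r_add computes_Id computes_Id]]) simp_all

lemmas computes_intros = computes_Cn1 computes_Cn2 computes_Z computes_S computes_Id
  computes_r_add computes_r_mul computes_r_pred computes_r_sub computes_r_triangle computes_r_pow2

section \<open>Semi-deciding membership in coded sets and lists\<close>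

text \<open>
  A sum of truncated differences vanishes iff each difference does, so the test is 0 iff
  (2q+1) 2^x \<le> c < (2q+2) 2^x, i.e. iff c div 2^x is the odd number 2q+1.
\<close>

definition set_member_test :: "nat \<Rightarrow> nat \<Rightarrow> nat \<Rightarrow> nat" where
  "set_member_test q c x = (let a = (2 * q + 1) * 2 ^ x in (a - c) + (Suc c - (a + 2 ^ x)))"

definition r_set_member_test :: recf where
  "r_set_member_test =
    (let p = Cn r_pow2 [Id 2]; a = Cn r_mul [Cn S [Cn r_add [Id 0, Id 0]], p]
     in Cn r_add [Cn r_sub [a, Id 1], Cn r_sub [Cn S [Id 1], Cn r_add [a, p]]])"

lemma computes_r_set_member_test:
  "computes r_set_member_test 3 (\<lambda>xs. set_member_test (xs ! 0) (xs ! 1) (xs ! 2))"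
  unfolding r_set_member_test_def Let_def
  by (rule computes_cong, (rule computes_intros | simp)+) (simp add: set_member_test_def algebra_simps)

lemma div_eq_iff_bounds:
  assumes "0 < (m::nat)"
  shows "c div m = k \<longleftrightarrow> k * m \<le> c \<and> c < k * m + m"
proof
  assume "c div m = k"
  then show "k * m \<le> c \<and> c < k * m + m"
    using div_times_less_eq_dividend[of c m] dividend_less_div_times[OF assms, of c] by auto
next
  assume "k * m \<le> c \<and> c < k * m + m"
  then show "c div m = k"
    by (intro div_nat_eqI) (auto simp: mult.commute)
qed

lemma set_decode_iff_member_test: "x \<in> set_decode c \<longleftrightarrow> (\<exists>q. set_member_test q c x = 0)"
proof -
  have "x \<in> set_decode c \<longleftrightarrow> (\<exists>q. c div 2 ^ x = 2 * q + 1)"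
    by (auto simp: set_decode_def elim!: oddE)
  also have "\<dots> \<longleftrightarrow> (\<exists>q. set_member_test q c x = 0)"
    by (simp add: div_eq_iff_bounds set_member_test_def Let_def Suc_le_eq)
  finally show ?thesis .
qed

lemma triangle_mono: "i \<le> j \<Longrightarrow> triangle i \<le> triangle j"
  unfolding triangle_def by (intro div_le_mono mult_le_mono) auto

text \<open>
  As prod_encode (a, b) = triangle (a + b) + a with a \<le> a + b, the sum a + b is the least s
  with prod_encode (a, b) < triangle (Suc s).
\<close>

definition pair_sum :: "nat \<Rightarrow> nat" where
  "pair_sum n = (LEAST s. n < triangle (Suc s))"

lemma prod_decode_eq_pair_sum:
  "prod_decode n = (n - triangle (pair_sum n), pair_sum n - (n - triangle (pair_sum n)))"
proof -
  obtain a b where ab: "prod_decode n = (a, b)"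
    by fastforce
  then have n: "n = triangle (a + b) + a"
    using prod_decode_inverse[of n] by (simp add: prod_encode_def)
  have "pair_sum n = a + b"
    unfolding pair_sum_def
  proof (rule Least_equality)
    show "n < triangle (Suc (a + b))"
      using n by simp
    show "a + b \<le> s" if "n < triangle (Suc s)" for s
      using that n triangle_mono[of "Suc s" "a + b"] by linarith
  qed
  with ab n show ?thesis by simp
qed

definition code_hd :: "nat \<Rightarrow> nat" where
  "code_hd c = fst (prod_decode (c - 1))"

definition code_tl :: "nat \<Rightarrow> nat" where
  "code_tl c = snd (prod_decode (c - 1))"

lemma code_tl_list_encode: "code_tl (list_encode ys) = list_encode (tl ys)"
proof (cases ys)
  case Nil
  have "prod_decode 0 = (0, 0)"
    using prod_encode_inverse[of "(0, 0)"] by (simp add: prod_encode_def)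
  with Nil show ?thesis by (simp add: code_tl_def)
qed (simp add: code_tl_def)

lemma funpow_code_tl_list_encode: "(code_tl ^^ k) (list_encode ys) = list_encode (drop k ys)"
  by (induction k) (simp_all add: code_tl_list_encode drop_Suc tl_drop)

lemma in_set_iff_hd_drop: "y \<in> set ys \<longleftrightarrow> (\<exists>k. drop k ys \<noteq> [] \<and> hd (drop k ys) = y)"
  by (auto simp: in_set_conv_nth hd_drop_conv_nth not_le)

definition list_member_test :: "nat \<Rightarrow> nat \<Rightarrow> nat \<Rightarrow> nat" where
  "list_member_test k c x =
    (let d = (code_tl ^^ k) c in (1 - d) + ((code_hd d - Suc x) + (Suc x - code_hd d)))"

lemma list_decode_iff_member_test:
  "Suc x \<in> set (list_decode c) \<longleftrightarrow> (\<exists>k. list_member_test k c x = 0)"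
proof -
  define ys where "ys = list_decode c"
  have "list_member_test k c x = 0 \<longleftrightarrow> drop k ys \<noteq> [] \<and> hd (drop k ys) = Suc x" for k
  proof -
    have "(code_tl ^^ k) c = list_encode (drop k ys)"
      using funpow_code_tl_list_encode[of k ys] by (simp add: ys_def)
    then show ?thesis
      by (cases "drop k ys") (auto simp: list_member_test_def code_hd_def)
  qed
  then show ?thesis
    by (simp add: in_set_iff_hd_drop ys_def)
qed

definition r_pair_sum :: recf where
  "r_pair_sum = Mn (Cn r_sub [Cn S [Id 1], Cn r_triangle [Cn S [Id 0]]])"
definition r_code_hd :: recf where
  "r_code_hd = Cn r_sub [r_pred, Cn r_triangle [Cn r_pair_sum [r_pred]]]"
definition r_code_tl :: recf where
  "r_code_tl = Cn r_sub [Cn r_pair_sum [r_pred], r_code_hd]"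
definition r_funpow_code_tl :: recf where
  "r_funpow_code_tl = Pr (Id 0) (Cn r_code_tl [Id 1])"

lemma computes_r_pair_sum: "computes r_pair_sum 1 (\<lambda>xs. pair_sum (xs ! 0))"
proof -
  let ?H = "\<lambda>xs. Suc (xs ! 1) - triangle (Suc (xs ! 0))"
  have "computes (Cn r_sub [Cn S [Id 1], Cn r_triangle [Cn S [Id 0]]]) (Suc 1) ?H"
    by (rule computes_cong, (rule computes_intros | simp)+)
  then have "computes r_pair_sum 1 (\<lambda>xs. LEAST s. ?H (s # xs) = 0)"
    unfolding r_pair_sum_def by (rule computes_Mn) (simp, metis le_add2)
  then show ?thesis
    by (rule computes_cong) (simp add: pair_sum_def less_Suc_eq_le)
qed

lemma computes_r_code_hd: "computes r_code_hd 1 (\<lambda>xs. code_hd (xs ! 0))"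
  unfolding r_code_hd_def
  by (rule computes_cong, (rule computes_intros computes_r_pair_sum | simp)+)
    (simp add: code_hd_def prod_decode_eq_pair_sum)

lemma computes_r_code_tl: "computes r_code_tl 1 (\<lambda>xs. code_tl (xs ! 0))"
  unfolding r_code_tl_def
  by (rule computes_cong, (rule computes_intros computes_r_pair_sum computes_r_code_hd | simp)+)
    (simp add: code_hd_def code_tl_def prod_decode_eq_pair_sum)

lemma computes_r_funpow_code_tl: "computes r_funpow_code_tl 2 (\<lambda>xs. (code_tl ^^ (xs ! 0)) (xs ! 1))"
  unfolding r_funpow_code_tl_def
  by (rule computes_Pr2[OF computes_Id computes_Cn1[OF computes_r_code_tl computes_Id]]) simp_all

definition r_list_member_test :: recf where
  "r_list_member_test =
    (let d = Cn r_funpow_code_tl [Id 0, Id 1]; h = Cn r_code_hd [d]; x' = Cn S [Id 2]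
     in Cn r_add [Cn r_sub [Cn S [Z], d], Cn r_add [Cn r_sub [h, x'], Cn r_sub [x', h]]])"

lemma computes_r_list_member_test:
  "computes r_list_member_test 3 (\<lambda>xs. list_member_test (xs ! 0) (xs ! 1) (xs ! 2))"
  unfolding r_list_member_test_def Let_def
  by (rule computes_cong, (rule computes_intros computes_r_code_hd computes_r_funpow_code_tl | simp)+)
    (simp add: list_member_test_def Let_def)

lemma acceptable_W_search_index:
  assumes "acceptable \<phi>" and "computes g 3 H"
  shows "\<exists>t. computable1 (\<lambda>c. Some (t c)) \<and> (\<forall>c. W \<phi> (t c) = {x. \<exists>z. H [z, c, x] = 0})"
proof -
  obtain t where "computable1 (\<lambda>c. Some (t c))"
    and "\<forall>c. \<phi> (t c) = (\<lambda>x. if \<exists>z. H [z, c, x] = 0 then Some 0 else None)"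
    using assms(1) computable2_unbounded_search[OF assms(2)] unfolding acceptable_def by blast
  moreover from this(2) have "W \<phi> (t c) = {x. \<exists>z. H [z, c, x] = 0}" for c
    by (simp add: W_def)
  ultimately show ?thesis by blast
qed

lemma acceptable_set_decode_index:
  assumes "acceptable \<phi>"
  shows "\<exists>t. computable1 (\<lambda>c. Some (t c)) \<and> (\<forall>c. W \<phi> (t c) = set_decode c)"
  using acceptable_W_search_index[OF assms computes_r_set_member_test]
  by (simp add: set_decode_iff_member_test set_eq_iff)

lemma acceptable_list_decode_index:
  assumes "acceptable \<phi>"
  shows "\<exists>t. computable1 (\<lambda>c. Some (t c)) \<and>
    (\<forall>c. W \<phi> (t c) = {x. Suc x \<in> set (list_decode c)})"
  using acceptable_W_search_index[OF assms computes_r_list_member_test]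
  by (simp add: list_decode_iff_member_test)

section \<open>Cautious learning of finite languages\<close>

lemma finite_content_list: "finite (content_list xs)"
  unfolding content_list_def by (simp add: finite_vimageI flip: vimage_def)

lemma content_list_initseg: "content_list (initseg T n) = {x. \<exists>j<n. T j = Some x}"
  by (force simp: content_list_def initseg_def)

lemma content_list_initseg_subset: "content_list (initseg T n) \<subseteq> content T"
  by (auto simp: content_list_initseg content_def)

lemma content_list_initseg_mono: "m \<le> n \<Longrightarrow> content_list (initseg T m) \<subseteq> content_list (initseg T n)"
  unfolding content_list_initseg by (blast intro: less_le_trans)

lemma content_list_seq_code: "{x. Suc x \<in> set (list_decode (seq_code xs))} = content_list xs"
  by (force simp: seq_code_def content_list_def split: option.splits)

lemma finite_subset_content_list_initseg:
  "finite A \<Longrightarrow> A \<subseteq> content T \<Longrightarrow> \<exists>n. A \<subseteq> content_list (initseg T n)"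
proof (induction A rule: finite_induct)
  case (insert x A)
  then obtain n where "A \<subseteq> content_list (initseg T n)"
    by blast
  moreover obtain j where "T j = Some x"
    using insert.prems by (auto simp: content_def)
  ultimately have "insert x A \<subseteq> content_list (initseg T (max n (Suc j)))"
    using content_list_initseg_mono[of n "max n (Suc j)" T] by (auto simp: content_list_initseg)
  then show ?case by blast
qed simp

lemma content_list_initseg_eventually_eq:
  assumes "finite (content T)"
  obtains n0 where "\<And>n. n0 \<le> n \<Longrightarrow> content_list (initseg T n) = content T"
proof -
  obtain n0 where "content T \<subseteq> content_list (initseg T n0)"
    using finite_subset_content_list_initseg[OF assms] by blast
  with content_list_initseg_mono content_list_initseg_subset show ?thesis
    by (meson order_trans subset_antisym that)
qed

lemma CautTar_if_W_subset_content: "(\<And>n. W \<phi> (p n) \<subseteq> content T) \<Longrightarrow> CautTar \<phi> p T"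
  unfolding CautTar_def by blast

lemma Sd_learns_finite:
  assumes W_t: "\<And>c. W \<phi> (t c) = set_decode c" and "finite L"
  shows "tau_learns \<phi> CautTar Sd Ex (\<lambda>c. Some (t c)) L"
proof -
  have p: "the (Sd (\<lambda>c. Some (t c)) T n) = t (set_code (content_list (initseg T n)))" for T n
    by (simp add: Sd_def)
  have W_p: "W \<phi> (the (Sd (\<lambda>c. Some (t c)) T n)) = content_list (initseg T n)" for T n
    by (simp add: p W_t set_code_def finite_content_list)
  have "Ex \<phi> (\<lambda>n. the (Sd (\<lambda>c. Some (t c)) T n)) T" if L: "content T = L" for T
  proof -
    obtain n0 where "\<And>n. n0 \<le> n \<Longrightarrow> content_list (initseg T n) = content T"
      using content_list_initseg_eventually_eq \<open>finite L\<close> L by blast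
    then show ?thesis
      unfolding Ex_def W_p by (intro exI[of _ n0]) (simp add: p)
  qed
  moreover have "CautTar \<phi> (\<lambda>n. the (Sd (\<lambda>c. Some (t c)) T n)) T" for T
    by (rule CautTar_if_W_subset_content) (simp add: W_p content_list_initseg_subset)
  ultimately show ?thesis
    unfolding tau_learns_def by (simp add: Sd_def)
qed

lemma G_learns_finite:
  assumes W_t: "\<And>c. W \<phi> (t c) = {x. Suc x \<in> set (list_decode c)}" and "finite L"
  shows "tau_learns \<phi> CautTar G Bc (\<lambda>c. Some (t c)) L"
proof -
  have W_p: "W \<phi> (the (G (\<lambda>c. Some (t c)) T n)) = content_list (initseg T n)" for T n
    by (simp add: G_def W_t content_list_seq_code)
  have "Bc \<phi> (\<lambda>n. the (G (\<lambda>c. Some (t c)) T n)) T" if "content T = L" for T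
    using content_list_initseg_eventually_eq \<open>finite L\<close> that unfolding Bc_def W_p by metis
  moreover have "CautTar \<phi> (\<lambda>n. the (G (\<lambda>c. Some (t c)) T n)) T" for T
    by (rule CautTar_if_W_subset_content) (simp add: W_p content_list_initseg_subset)
  ultimately show ?thesis
    unfolding tau_learns_def by (simp add: G_def)
qed

lemma tau_class_CautTar_imp_finite:
  fixes \<beta> :: "learner \<Rightarrow> ltext \<Rightarrow> nat \<Rightarrow> nat option"
  assumes prefix: "\<And>h T T' n. initseg T n = initseg T' n \<Longrightarrow> \<beta> h T n = \<beta> h T' n"
    and correct: "\<And>p T. \<delta> \<phi> p T \<Longrightarrow> \<exists>n. W \<phi> (p n) = content T"
    and "tau_class \<phi> CautTar \<beta> \<delta> \<L>" and "L \<in> \<L>"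
  shows "finite L"
proof (rule ccontr)
  assume "infinite L"
  obtain h where learns: "tau_learns \<phi> CautTar \<beta> \<delta> h L"
    using assms(3,4) unfolding tau_class_def by blast
  define T :: ltext where "T = (\<lambda>n. if n \<in> L then Some n else None)"
  have "content T = L"
    by (auto simp: T_def content_def split: if_splits)
  then obtain n0 where n0: "W \<phi> (the (\<beta> h T n0)) = L"
    using learns correct unfolding tau_learns_def by metis
  define T' :: ltext where "T' = (\<lambda>n. if n < n0 then T n else None)"
  have "\<beta> h T' n0 = \<beta> h T n0"
    by (rule prefix) (simp add: initseg_def T'_def)
  moreover have "CautTar \<phi> (\<lambda>n. the (\<beta> h T' n)) T'"
    using learns unfolding tau_learns_def by blast
  ultimately have "\<not> content T' \<subset> L"
    using n0 unfolding CautTar_def by metis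
  moreover have "content T' \<subseteq> L" and "content T' \<subseteq> {..<n0}"
    by (auto simp: T'_def T_def content_def split: if_splits)
  ultimately have "L \<subseteq> {..<n0}"
    by blast
  with \<open>infinite L\<close> show False
    using finite_subset by blast
qed

theorem theorem3:
  fixes \<phi> :: "nat \<Rightarrow> nat \<Rightarrow> nat option" and \<L> :: "nat set set"
  assumes "acceptable \<phi>"
  shows "((\<forall>L\<in>\<L>. finite L) \<longleftrightarrow> tau_class \<phi> CautTar Sd Ex \<L>) \<and>
         ((\<forall>L\<in>\<L>. finite L) \<longleftrightarrow> tau_class \<phi> CautTar G Bc \<L>)"
proof -
  obtain t where "computable1 (\<lambda>c. Some (t c))" and "\<And>c. W \<phi> (t c) = set_decode c"
    using acceptable_set_decode_index[OF assms] by blast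
  then have Sd_Ex: "tau_class \<phi> CautTar Sd Ex \<L>" if "\<forall>L\<in>\<L>. finite L"
    using that Sd_learns_finite unfolding tau_class_def by blast
  obtain t' where "computable1 (\<lambda>c. Some (t' c))"
    and "\<And>c. W \<phi> (t' c) = {x. Suc x \<in> set (list_decode c)}"
    using acceptable_list_decode_index[OF assms] by blast
  then have G_Bc: "tau_class \<phi> CautTar G Bc \<L>" if "\<forall>L\<in>\<L>. finite L"
    using that G_learns_finite unfolding tau_class_def by blast
  have "\<forall>L\<in>\<L>. finite L" if "tau_class \<phi> CautTar Sd Ex \<L>"
    using tau_class_CautTar_imp_finite[OF _ _ that] by (simp add: Sd_def Ex_def) blast
  moreover have "\<forall>L\<in>\<L>. finite L" if "tau_class \<phi> CautTar G Bc \<L>"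
    using tau_class_CautTar_imp_finite[OF _ _ that] by (simp add: G_def Bc_def) blast
  ultimately show ?thesis
    using Sd_Ex G_Bc by blast
qed

end
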